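(* Let $(Y,y)$ be a special tuple whose vector $y$ has first coordinate $y_1=0$ and satisfies $y^TKy\neq 0$ (a nonaffine special tuple). If $(Y',y')$ is a special tuple equivalent to $(Y,y)$, then $y'_1=0$ and $(y')^TKy'\neq 0$, i.e. $(Y',y')$ is also nonaffine.
   Context: Let $n\ge 0$ be an integer and let $\widetilde K$ be a real symmetric $n\times n$ matrix with $\widetilde K^2=I_n$. Let $V=\mathbb R^{n+2}$ with standard basis $e_1,\dots,e_{n+2}$, and let $K=\begin{pmatrix}0&0&1\\0&\widetilde K&0\\1&0&0\end{pmatrix}$ (block sizes $1,n,1$). For $x,w\in V$ write $x^*=x^TK$ and $L_{u,w}=u\,w^*-w\,u^*$. Let $O(V,K)=\{P:P^TKP=K\}$, $\mathfrak o(V,K)=\{X:X^TK+KX=0\}$, $O(V,K)_{e_{n+2}}=\{P\in O(V,K):Pe_{n+2}=e_{n+2}\}$. A special tuple is a pair $(Y,y)$ with $Y\in\mathfrak o(V,K)$, $y\in V$; $y_1$ denotes the first coordinate of $y$. Two special tuples $(Y,y)$ and $(Y',y')$ are equivalent if there exist $P\in O(V,K)_{e_{n+2}}$, vectors $v,p\in V$ with $p^*(e_{n+2})=0$, and $v_0\in\mathbb R$ such that $Y'+L_{v,e_{n+2}}=P(Y+L_{p,y})P^{-1}$ and $y'=Py+v_0e_{n+2}$. *)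

theory Defs
  imports "Jordan_Normal_Form.Matrix"
begin

text \<open>V = R^(n+2), realised as carrier_vec (n+2); coordinates are 0-indexed, so the
paper's e_1, ..., e_(n+2) are unit_vec (n+2) 0, ..., unit_vec (n+2) (n+1), and the paper's
y_1 is y $ 0.\<close>

definition bigK :: "nat \<Rightarrow> real mat \<Rightarrow> real mat" where
  "bigK n Kt = mat (n+2) (n+2) (\<lambda>(i,j).
     if i = 0 then (if j = n+1 then 1 else 0)
     else if i = n+1 then (if j = 0 then 1 else 0)
     else if j = 0 \<or> j = n+1 then 0
     else Kt $$ (i-1, j-1))"

definition star_app :: "real mat \<Rightarrow> real vec \<Rightarrow> real vec \<Rightarrow> real" where
  "star_app K x w = x \<bullet> (K *\<^sub>v w)"

text \<open>The row vector x^* = x^T K, as a vector: (x^T K)_j = (K^T x)_j.\<close>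
definition star_vec :: "real mat \<Rightarrow> real vec \<Rightarrow> real vec" where
  "star_vec K x = transpose_mat K *\<^sub>v x"

definition Lmat :: "real mat \<Rightarrow> real vec \<Rightarrow> real vec \<Rightarrow> real mat" where
  "Lmat K u w = mat (dim_vec u) (dim_vec u) (\<lambda>(i,j).
      u $ i * star_vec K w $ j - w $ i * star_vec K u $ j)"

definition orth_group :: "nat \<Rightarrow> real mat \<Rightarrow> real mat set" where
  "orth_group N K = {P \<in> carrier_mat N N. transpose_mat P * K * P = K}"

definition orth_alg :: "nat \<Rightarrow> real mat \<Rightarrow> real mat set" where
  "orth_alg N K = {X \<in> carrier_mat N N. transpose_mat X * K + K * X = 0\<^sub>m N N}"

definition special_tuple :: "nat \<Rightarrow> real mat \<Rightarrow> real mat \<Rightarrow> real vec \<Rightarrow> bool" where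
  "special_tuple n Kt Y y \<longleftrightarrow> Y \<in> orth_alg (n+2) (bigK n Kt) \<and> y \<in> carrier_vec (n+2)"

definition equiv_tuples ::
  "nat \<Rightarrow> real mat \<Rightarrow> real mat \<Rightarrow> real vec \<Rightarrow> real mat \<Rightarrow> real vec \<Rightarrow> bool" where
  "equiv_tuples n Kt Y y Y' y' \<longleftrightarrow>
     (let K = bigK n Kt; N = n+2; e = unit_vec N (n+1) in
      \<exists>P Pinv v p (v0::real).
        P \<in> orth_group N K \<and> P *\<^sub>v e = e \<and>
        Pinv \<in> carrier_mat N N \<and> P * Pinv = 1\<^sub>m N \<and> Pinv * P = 1\<^sub>m N \<and>
        v \<in> carrier_vec N \<and> p \<in> carrier_vec N \<and> star_app K p e = 0 \<and>
        Y' + Lmat K v e = P * (Y + Lmat K p y) * Pinv \<and>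
        y' = P *\<^sub>v y + v0 \<cdot>\<^sub>v e)"

end

theory Submission
  imports Defs
begin

text \<open>Write B(x, z) = x^T K z and e = e_(n+2). By the shape of K, B(e, x) = B(x, e) = x_1,
  and in particular B(e, e) = 0. An equivalence acts on the vector by y' = P y + v_0 e with P
  preserving B and fixing e. Hence y'_1 = B(e, P y) = B(P e, P y) = B(e, y) = y_1 = 0, and then
  B(y', y') = B(P y, P y) = B(y, y) because the cross terms and B(e, e) vanish. Only the block
  shape of K enters.\<close>

lemma bigK_carrier: "bigK n Kt \<in> carrier_mat (n+2) (n+2)"
  unfolding bigK_def by simp

lemma bigK_mult_last_unit: "bigK n Kt *\<^sub>v unit_vec (n+2) (n+1) = unit_vec (n+2) 0"
  by (rule eq_vecI) (auto simp: bigK_def unit_vec_def scalar_prod_def)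

lemma scalar_prod_bigK_last_unit_right:
  "x \<bullet> (bigK n Kt *\<^sub>v unit_vec (n+2) (n+1)) = x $ 0"
  unfolding bigK_mult_last_unit by simp

lemma scalar_prod_bigK_last_unit_left:
  assumes "x \<in> carrier_vec (n+2)"
  shows "unit_vec (n+2) (n+1) \<bullet> (bigK n Kt *\<^sub>v x) = x $ 0"
proof -
  have "row (bigK n Kt) (n+1) = unit_vec (n+2) 0"
    by (rule eq_vecI) (auto simp: bigK_def unit_vec_def)
  then show ?thesis
    using assms bigK_carrier[of n Kt] by (simp add: scalar_prod_left_unit)
qed

lemma orth_group_preserves_form:
  assumes P: "P \<in> orth_group N K" and K: "K \<in> carrier_mat N N"
    and x: "x \<in> carrier_vec N" and z: "z \<in> carrier_vec N"
  shows "(P *\<^sub>v x) \<bullet> (K *\<^sub>v (P *\<^sub>v z)) = x \<bullet> (K *\<^sub>v z)"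
proof -
  have Pc: "P \<in> carrier_mat N N" and PK: "transpose_mat P * K * P = K"
    using P by (auto simp: orth_group_def)
  have KPz: "K *\<^sub>v (P *\<^sub>v z) \<in> carrier_vec N" using Pc K z by simp
  have "(P *\<^sub>v x) \<bullet> (K *\<^sub>v (P *\<^sub>v z)) = (transpose_mat P *\<^sub>v (K *\<^sub>v (P *\<^sub>v z))) \<bullet> x"
    using transpose_vec_mult_scalar[OF Pc x KPz] comm_scalar_prod[OF KPz, of "P *\<^sub>v x"] Pc x
    by simp
  also have "transpose_mat P *\<^sub>v (K *\<^sub>v (P *\<^sub>v z)) = (transpose_mat P * K * P) *\<^sub>v z"
    using Pc K z by (simp add: assoc_mult_mat_vec[of _ N N _ N])
  also have "\<dots> = K *\<^sub>v z" using PK by simp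
  also have "(K *\<^sub>v z) \<bullet> x = x \<bullet> (K *\<^sub>v z)" using K x z by (intro comm_scalar_prod) auto
  finally show ?thesis .
qed

lemma form_add_isotropic:
  fixes K :: "'a :: field mat"
  assumes K: "K \<in> carrier_mat N N" and x: "x \<in> carrier_vec N" and e: "e \<in> carrier_vec N"
    and "x \<bullet> (K *\<^sub>v e) = 0" and "e \<bullet> (K *\<^sub>v x) = 0" and "e \<bullet> (K *\<^sub>v e) = 0"
  shows "(x + c \<cdot>\<^sub>v e) \<bullet> (K *\<^sub>v (x + c \<cdot>\<^sub>v e)) = x \<bullet> (K *\<^sub>v x)"
proof -
  have Kx: "K *\<^sub>v x \<in> carrier_vec N" and Ke: "K *\<^sub>v e \<in> carrier_vec N" using K x e by auto
  have "K *\<^sub>v (x + c \<cdot>\<^sub>v e) = K *\<^sub>v x + c \<cdot>\<^sub>v (K *\<^sub>v e)"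
    using K x e by (simp add: mult_add_distrib_mat_vec mult_mat_vec[OF K e])
  then show ?thesis
    using assms Kx Ke
    by (simp add: add_scalar_prod_distrib[of _ N] scalar_prod_add_distrib[of _ N]
        smult_scalar_prod_distrib[of _ N] scalar_prod_smult_distrib[of _ N])
qed

lemma equiv_tuples_vector_part:
  assumes "equiv_tuples n Kt Y y Y' y'"
  obtains P v0 where "P \<in> orth_group (n+2) (bigK n Kt)"
    and "P *\<^sub>v unit_vec (n+2) (n+1) = unit_vec (n+2) (n+1)"
    and "y' = P *\<^sub>v y + v0 \<cdot>\<^sub>v unit_vec (n+2) (n+1)"
  using assms unfolding equiv_tuples_def Let_def by blast

theorem lemma8:
  fixes n :: nat and Kt Y Y' :: "real mat" and y y' :: "real vec"
  assumes "Kt \<in> carrier_mat n n"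
    and "transpose_mat Kt = Kt"
    and "Kt * Kt = 1\<^sub>m n"
    and "special_tuple n Kt Y y"
    and "y $ 0 = 0"
    and "y \<bullet> (bigK n Kt *\<^sub>v y) \<noteq> 0"
    and "special_tuple n Kt Y' y'"
    and "equiv_tuples n Kt Y y Y' y'"
  shows "y' $ 0 = 0 \<and> y' \<bullet> (bigK n Kt *\<^sub>v y') \<noteq> 0"
proof -
  define K where "K = bigK n Kt"
  define e :: "real vec" where "e = unit_vec (n+2) (n+1)"
  have y: "y \<in> carrier_vec (n+2)" using assms(4) by (simp add: special_tuple_def)
  obtain P v0 where P: "P \<in> orth_group (n+2) K" and Pe: "P *\<^sub>v e = e"
    and y': "y' = P *\<^sub>v y + v0 \<cdot>\<^sub>v e"
    using equiv_tuples_vector_part[OF assms(8)] unfolding K_def e_def by blast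
  have K: "K \<in> carrier_mat (n+2) (n+2)" and e: "e \<in> carrier_vec (n+2)"
    and Py: "P *\<^sub>v y \<in> carrier_vec (n+2)"
    using P y bigK_carrier by (auto simp: K_def e_def orth_group_def)
  have Py_first: "(P *\<^sub>v y) $ 0 = 0"
    using orth_group_preserves_form[OF P K e y] scalar_prod_bigK_last_unit_left[OF Py]
      scalar_prod_bigK_last_unit_left[OF y] Pe assms(5)
    by (simp add: K_def e_def)
  have "y' \<bullet> (K *\<^sub>v y') = (P *\<^sub>v y) \<bullet> (K *\<^sub>v (P *\<^sub>v y))"
    unfolding y' using Py_first scalar_prod_bigK_last_unit_left[OF Py]
      scalar_prod_bigK_last_unit_right[of "P *\<^sub>v y" n Kt]
      scalar_prod_bigK_last_unit_right[of e n Kt]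
    by (intro form_add_isotropic[OF K Py e]) (simp_all add: K_def e_def)
  also have "\<dots> = y \<bullet> (K *\<^sub>v y)" by (rule orth_group_preserves_form[OF P K y y])
  finally show ?thesis
    using y' Py_first Py e assms(6) by (simp add: K_def e_def)
qed

end
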